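(* Let $R,r>0$, $q_1=\frac{1}{2r}+\frac{1}{2R}$, and let $K^{-1/2}_0$, $\mathcal{K}^*_{\partial\Omega}$ and $\{\mathbb{E}(t)\}_{t\in[-1/2,1/2]}$ be as in the context (touching disks). Then $$\mathcal{K}^*_{\partial\Omega}=\int_{-1/2}^{1/2}t\,d\mathbb{E}(t),$$ that is, $\langle f,\mathcal{K}^*_{\partial\Omega}[g]\rangle_{-1/2}=\int_{-1/2}^{1/2}t\,d\langle f,\mathbb{E}(t)g\rangle_{-1/2}$ for all $f,g\in K^{-1/2}_0$.
   Context: Setting (touching disks). Identify $\mathbb{R}^2$ with $\mathbb{C}$; for $a\in\mathbb{R}\setminus\{0\}$ let $B_a$ be the open disk of radius $|a|$ centered at $(a,0)$. Fix $R,r>0$, let $\Omega=B_R\cup B_{-r}$ (two externally touching disks), and put $q_1=\frac{1}{2r}+\frac{1}{2R}>0$. For $k\neq0$ let $$\mathbb{S}(k)=\frac{1}{2|k|}\begin{bmatrix}1-e^{-|k|q_1}&0\\0&1+e^{-|k|q_1}\end{bmatrix},\qquad \mathbb{K}(k)=\frac12e^{-|k|q_1}\begin{bmatrix}1&0\\0&-1\end{bmatrix}.$$ $K^{-1/2}_0$ is the Hilbert space of pairs $\hat\varphi=(\hat\varphi_1,\hat\varphi_2)^T$ of measurable complex functions on $\mathbb{R}$ (mod a.e.) with $\int_{\mathbb{R}}\hat\varphi^T\mathbb{S}\overline{\hat\varphi}\,dk<\infty$, with inner product $\langle\psi,\varphi\rangle_{-1/2}=\int_{\mathbb{R}}\hat\psi^T\mathbb{S}\overline{\hat\varphi}\,dk$.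 (In the paper such a pair represents the boundary density $\varphi=U^{-1}P\hat\varphi$ on $\partial\Omega$, with $P=\frac1{\sqrt2}\begin{bmatrix}-1&1\\1&1\end{bmatrix}$ and $U$ the Fourier transform of the density pulled back by $z\mapsto 1/z$ to the lines $x=\frac1{2R}$ and $x=-\frac1{2r}$; one writes $PU\varphi=(\hat\varphi_1,\hat\varphi_2)^T$.) The Neumann–Poincaré operator $\mathcal{K}^*_{\partial\Omega}$ on $K^{-1/2}_0$ is the multiplication operator $\hat\varphi\mapsto\mathbb{K}\hat\varphi$. For $s\in\mathbb{R}\cup\{\infty\}$ let $\mathcal{P}^1(s)(\hat\varphi_1,\hat\varphi_2)=(\chi_{(-\infty,s]}\hat\varphi_1,0)$, $\mathcal{P}^2(s)(\hat\varphi_1,\hat\varphi_2)=(0,\chi_{(-\infty,s]}\hat\varphi_2)$ (with $\chi_{(-\infty,\infty]}\equiv1$), $\mathbb{I}=\mathcal{P}^1(\infty)+\mathcal{P}^2(\infty)$, and $$\mathbb{E}(t)=\begin{cases}\mathcal{P}^2\!\left(-\frac{\ln(-2t)}{q_1}\right)-\mathcal{P}^2\!\left(\frac{\ln(-2t)}{q_1}\right),& t\in[-1/2,0),\\[2pt]\mathcal{P}^1\!\left(\frac{\ln(2t)}{q_1}\right)-\mathcal{P}^1\!\left(-\frac{\ln(2t)}{q_1}\right)+\mathbb{I},& t\in(0,1/2],\end{cases}\qquad \mathbb{E}(0)=\lim_{t\to0^+}\mathbb{E}(t).$$ *)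

theory Defs
  imports "HOL-Analysis.Analysis"
begin

text \<open>An element of K_0^{-1/2} is represented by a pair of functions
  \<phi> = (\<phi>1, \<phi>2) :: real \<Rightarrow> complex \<times> complex (Fourier side).\<close>

definition q1 :: "real \<Rightarrow> real \<Rightarrow> real" where
  "q1 R r = 1 / (2 * r) + 1 / (2 * R)"

definition S11 :: "real \<Rightarrow> real \<Rightarrow> real \<Rightarrow> real" where
  "S11 R r k = (1 / (2 * \<bar>k\<bar>)) * (1 - exp (- \<bar>k\<bar> * q1 R r))"

definition S22 :: "real \<Rightarrow> real \<Rightarrow> real \<Rightarrow> real" where
  "S22 R r k = (1 / (2 * \<bar>k\<bar>)) * (1 + exp (- \<bar>k\<bar> * q1 R r))"

definition K0 :: "real \<Rightarrow> real \<Rightarrow> (real \<Rightarrow> complex \<times> complex) set" where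
  "K0 R r = {\<phi>. (\<lambda>k. fst (\<phi> k)) \<in> borel_measurable lborel \<and>
                 (\<lambda>k. snd (\<phi> k)) \<in> borel_measurable lborel \<and>
                 (\<integral>\<^sup>+ k. ennreal (S11 R r k * (cmod (fst (\<phi> k)))\<^sup>2
                               + S22 R r k * (cmod (snd (\<phi> k)))\<^sup>2) \<partial>lborel) < \<infinity>}"

definition ip :: "real \<Rightarrow> real \<Rightarrow> (real \<Rightarrow> complex \<times> complex) \<Rightarrow> (real \<Rightarrow> complex \<times> complex) \<Rightarrow> complex" where
  "ip R r \<psi> \<phi> = (LINT k|lborel.
       complex_of_real (S11 R r k) * fst (\<psi> k) * cnj (fst (\<phi> k))
     + complex_of_real (S22 R r k) * snd (\<psi> k) * cnj (snd (\<phi> k)))"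

definition NP :: "real \<Rightarrow> real \<Rightarrow> (real \<Rightarrow> complex \<times> complex) \<Rightarrow> (real \<Rightarrow> complex \<times> complex)" where
  "NP R r \<phi> = (\<lambda>k. (complex_of_real (exp (- \<bar>k\<bar> * q1 R r) / 2) * fst (\<phi> k),
                     - complex_of_real (exp (- \<bar>k\<bar> * q1 R r) / 2) * snd (\<phi> k)))"

definition chi :: "real \<Rightarrow> real \<Rightarrow> complex" where
  "chi s k = (if k \<le> s then 1 else 0)"

definition P1 :: "real \<Rightarrow> (real \<Rightarrow> complex \<times> complex) \<Rightarrow> (real \<Rightarrow> complex \<times> complex)" where
  "P1 s \<phi> = (\<lambda>k. (chi s k * fst (\<phi> k), 0))"

definition P2 :: "real \<Rightarrow> (real \<Rightarrow> complex \<times> complex) \<Rightarrow> (real \<Rightarrow> complex \<times> complex)" where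
  "P2 s \<phi> = (\<lambda>k. (0, chi s k * snd (\<phi> k)))"

definition Iop :: "(real \<Rightarrow> complex \<times> complex) \<Rightarrow> (real \<Rightarrow> complex \<times> complex)" where
  "Iop \<phi> = \<phi>"

definition Eop :: "real \<Rightarrow> real \<Rightarrow> real \<Rightarrow> (real \<Rightarrow> complex \<times> complex) \<Rightarrow> (real \<Rightarrow> complex \<times> complex)" where
  "Eop R r t \<phi> =
     (if t < 0 then
        (\<lambda>k. P2 (- ln (-2 * t) / q1 R r) \<phi> k - P2 (ln (-2 * t) / q1 R r) \<phi> k)
      else
        (\<lambda>k. P1 (ln (2 * t) / q1 R r) \<phi> k - P1 (- ln (2 * t) / q1 R r) \<phi> k + Iop \<phi> k))"

definition Eform :: "real \<Rightarrow> real \<Rightarrow> (real \<Rightarrow> complex \<times> complex) \<Rightarrow> (real \<Rightarrow> complex \<times> complex) \<Rightarrow> real \<Rightarrow> complex" where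
  "Eform R r f g t =
     (if t = 0 then Lim (at_right 0) (\<lambda>s. ip R r f (Eop R r s g))
      else ip R r f (Eop R r t g))"

definition RS_has_integral ::
  "(real \<Rightarrow> complex) \<Rightarrow> (real \<Rightarrow> complex) \<Rightarrow> real \<Rightarrow> real \<Rightarrow> complex \<Rightarrow> bool" where
  "RS_has_integral h F a b I \<longleftrightarrow>
     (\<forall>\<epsilon>>0. \<exists>\<delta>>0. \<forall>(n::nat) (x::nat \<Rightarrow> real) (\<xi>::nat \<Rightarrow> real).
        n \<ge> 1 \<and> x 0 = a \<and> x n = b \<and>
        (\<forall>i<n. x i < x (Suc i) \<and> x (Suc i) - x i < \<delta> \<and> x i \<le> \<xi> i \<and> \<xi> i \<le> x (Suc i))
        \<longrightarrow> cmod ((\<Sum>i<n. h (\<xi> i) * (F (x (Suc i)) - F (x i))) - I) < \<epsilon>)"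

end

theory Submission
  imports Defs
begin

(* In Fourier variables K* and every E(t) act by multiplication. For fixed k, E(t) multiplies
   the first component by the unit step in t jumping at the eigenvalue
   sigma(k) = exp(-|k| q1) / 2 of K(k), and the second by the unit step jumping at -sigma(k).
   A Riemann-Stieltjes sum of t against a unit step at c differs from c by at most the mesh.
   Integrating this estimate in k against the integrable densities of <f, .>_{-1/2} shows that
   the Riemann-Stieltjes sums of t d<f, E(t) g> lie within a constant times the mesh of
   int sigma(k) (density 1) - int sigma(k) (density 2) = <f, K* g>. *)

section \<open>Riemann--Stieltjes integrals against families of unit steps\<close>

\<comment> \<open>For E(t) the value at the jump itself depends on the sign of k, hence the flag b.\<close>
definition heaviside :: "bool \<Rightarrow> real \<Rightarrow> real \<Rightarrow> real" where
  "heaviside b c t = (if c < t \<or> (b \<and> c = t) then 1 else 0)"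

lemma heaviside_mono: "t \<le> t' \<Longrightarrow> heaviside b c t \<le> heaviside b c t'"
  unfolding heaviside_def by auto

lemma heaviside_eq_0_or_1: "heaviside b c t = 0 \<or> heaviside b c t = 1"
  unfolding heaviside_def by auto

lemma abs_heaviside_le_1: "\<bar>heaviside b c t\<bar> \<le> 1"
  unfolding heaviside_def by auto

lemma heaviside_eq_0_imp_le: "heaviside b c t = 0 \<Longrightarrow> t \<le> c"
  unfolding heaviside_def by (auto split: if_splits)

lemma heaviside_eq_1_imp_ge: "heaviside b c t = 1 \<Longrightarrow> c \<le> t"
  unfolding heaviside_def by (auto split: if_splits)

lemma heaviside_reflect: "heaviside b c t = 1 - heaviside (\<not> b) (- c) (- t)"
  unfolding heaviside_def by auto

lemma heaviside_measurable [measurable]: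
  assumes [measurable]: "c \<in> borel_measurable M" "Measurable.pred M b"
  shows "(\<lambda>x. heaviside (b x) (c x) t) \<in> borel_measurable M"
  unfolding heaviside_def by measurable

definition RS_sum :: "(real \<Rightarrow> 'a::comm_ring) \<Rightarrow> (real \<Rightarrow> 'a) \<Rightarrow> nat \<Rightarrow> (nat \<Rightarrow> real) \<Rightarrow> (nat \<Rightarrow> real) \<Rightarrow> 'a" where
  "RS_sum h F n x \<xi> = (\<Sum>i<n. h (\<xi> i) * (F (x (Suc i)) - F (x i)))"

definition fine_partition :: "real \<Rightarrow> real \<Rightarrow> real \<Rightarrow> nat \<Rightarrow> (nat \<Rightarrow> real) \<Rightarrow> (nat \<Rightarrow> real) \<Rightarrow> bool" where
  "fine_partition a b \<delta> n x \<xi> \<longleftrightarrow> n \<ge> 1 \<and> x 0 = a \<and> x n = b \<and>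
     (\<forall>i<n. x i < x (Suc i) \<and> x (Suc i) - x i < \<delta> \<and> x i \<le> \<xi> i \<and> \<xi> i \<le> x (Suc i))"

lemma RS_has_integral_iff:
  "RS_has_integral h F a b I \<longleftrightarrow>
     (\<forall>\<epsilon>>0. \<exists>\<delta>>0. \<forall>n x \<xi>. fine_partition a b \<delta> n x \<xi> \<longrightarrow> cmod (RS_sum h F n x \<xi> - I) < \<epsilon>)"
  unfolding RS_has_integral_def fine_partition_def RS_sum_def ..

lemma fine_partition_point_mem:
  assumes "fine_partition a b \<delta> n x \<xi>" "i \<le> n"
  shows "x i \<in> {a..b}"
proof -
  have mono: "x i \<le> x j" if "i \<le> j" "j \<le> n" for i j
    using that
  proof (induction j)
    case (Suc j)
    show ?case
    proof (cases "i = Suc j")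
      case False
      then have "x i \<le> x j" using Suc by simp
      also have "x j < x (Suc j)" using assms(1) Suc.prems unfolding fine_partition_def by simp
      finally show ?thesis by simp
    qed simp
  qed simp
  show ?thesis
    using mono[of 0 i] mono[of i n] assms unfolding fine_partition_def by auto
qed

lemma RS_has_integral_cong:
  assumes "RS_has_integral h F a b I" "\<And>t. t \<in> {a..b} \<Longrightarrow> F t = G t"
  shows "RS_has_integral h G a b I"
proof -
  have same_sums: "RS_sum h F n x \<xi> = RS_sum h G n x \<xi>"
    if "fine_partition a b \<delta> n x \<xi>" for \<delta> n x \<xi>
    unfolding RS_sum_def
    using assms(2) fine_partition_point_mem[OF that] by (intro sum.cong) auto
  show ?thesis
    unfolding RS_has_integral_iff
  proof (intro allI impI)
    fix \<epsilon> :: real assume "\<epsilon> > 0"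
    then obtain \<delta> where "\<delta> > 0"
      and "\<forall>n x \<xi>. fine_partition a b \<delta> n x \<xi> \<longrightarrow> cmod (RS_sum h F n x \<xi> - I) < \<epsilon>"
      using assms(1) unfolding RS_has_integral_iff by blast
    with same_sums show "\<exists>\<delta>>0. \<forall>n x \<xi>. fine_partition a b \<delta> n x \<xi> \<longrightarrow> cmod (RS_sum h G n x \<xi> - I) < \<epsilon>"
      by metis
  qed
qed

lemma RS_has_integral_add:
  assumes F: "RS_has_integral h F a b I" and G: "RS_has_integral h G a b J"
  shows "RS_has_integral h (\<lambda>t. F t + G t) a b (I + J)"
  unfolding RS_has_integral_iff
proof (intro allI impI)
  fix \<epsilon> :: real assume "\<epsilon> > 0"
  then have "\<epsilon> / 2 > 0" by simp
  obtain \<delta>1 where "\<delta>1 > 0"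
    and \<delta>1: "\<And>n x \<xi>. fine_partition a b \<delta>1 n x \<xi> \<Longrightarrow> cmod (RS_sum h F n x \<xi> - I) < \<epsilon> / 2"
    using F[unfolded RS_has_integral_iff, rule_format, OF \<open>\<epsilon> / 2 > 0\<close>] by blast
  obtain \<delta>2 where "\<delta>2 > 0"
    and \<delta>2: "\<And>n x \<xi>. fine_partition a b \<delta>2 n x \<xi> \<Longrightarrow> cmod (RS_sum h G n x \<xi> - J) < \<epsilon> / 2"
    using G[unfolded RS_has_integral_iff, rule_format, OF \<open>\<epsilon> / 2 > 0\<close>] by blast
  have "cmod (RS_sum h (\<lambda>t. F t + G t) n x \<xi> - (I + J)) < \<epsilon>"
    if "fine_partition a b (min \<delta>1 \<delta>2) n x \<xi>" for n x \<xi>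
  proof -
    have "fine_partition a b \<delta>1 n x \<xi>" "fine_partition a b \<delta>2 n x \<xi>"
      using that unfolding fine_partition_def by auto
    then have "cmod (RS_sum h F n x \<xi> - I) + cmod (RS_sum h G n x \<xi> - J) < \<epsilon>"
      using \<delta>1 \<delta>2 by (metis add_strict_mono field_sum_of_halves)
    moreover have "RS_sum h (\<lambda>t. F t + G t) n x \<xi> - (I + J) =
        (RS_sum h F n x \<xi> - I) + (RS_sum h G n x \<xi> - J)"
      unfolding RS_sum_def by (simp add: sum.distrib[symmetric] algebra_simps)
    ultimately show ?thesis
      by (metis norm_triangle_ineq order_le_less_trans)
  qed
  then show "\<exists>\<delta>>0. \<forall>n x \<xi>. fine_partition a b \<delta> n x \<xi> \<longrightarrow>
      cmod (RS_sum h (\<lambda>t. F t + G t) n x \<xi> - (I + J)) < \<epsilon>"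
    using \<open>\<delta>1 > 0\<close> \<open>\<delta>2 > 0\<close> by (intro exI[of _ "min \<delta>1 \<delta>2"]) simp
qed

lemma RS_sum_heaviside:
  assumes P: "fine_partition lo hi \<delta> n x \<xi>"
    and lo: "heaviside b c lo = 0" and hi: "heaviside b c hi = 1"
  shows "\<bar>RS_sum (\<lambda>t. t) (heaviside b c) n x \<xi> - c\<bar> \<le> \<delta>"
proof -
  define D where "D i = heaviside b c (x (Suc i)) - heaviside b c (x i)" for i
  have "(\<Sum>i<n. D i) = heaviside b c (x n) - heaviside b c (x 0)"
    unfolding D_def by (rule sum_lessThan_telescope)
  then have sum_D: "(\<Sum>i<n. D i) = 1"
    using P lo hi unfolding fine_partition_def by simp
  have term_le: "\<bar>(\<xi> i - c) * D i\<bar> \<le> \<delta> * D i" if "i < n" for i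
  proof -
    have cell: "x i < x (Suc i)" "x (Suc i) - x i < \<delta>" "x i \<le> \<xi> i" "\<xi> i \<le> x (Suc i)"
      using P that unfolding fine_partition_def by auto
    have "D i \<ge> 0"
      unfolding D_def using heaviside_mono[of "x i" "x (Suc i)" b c] cell(1) by simp
    show ?thesis
    proof (cases "D i = 0")
      case False
      \<comment> \<open>only the cell containing the jump contributes\<close>
      then have "heaviside b c (x i) = 0" "heaviside b c (x (Suc i)) = 1"
        using heaviside_eq_0_or_1[of b c "x i"] heaviside_eq_0_or_1[of b c "x (Suc i)"] \<open>D i \<ge> 0\<close>
        unfolding D_def by auto
      then have "x i \<le> c" "c \<le> x (Suc i)"
        by (auto dest: heaviside_eq_0_imp_le heaviside_eq_1_imp_ge)
      then have "\<bar>\<xi> i - c\<bar> \<le> \<delta>"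
        using cell by linarith
      then show ?thesis
        using \<open>D i \<ge> 0\<close> by (simp add: abs_mult mult_right_mono)
    qed simp
  qed
  have "RS_sum (\<lambda>t. t) (heaviside b c) n x \<xi> - c = (\<Sum>i<n. (\<xi> i - c) * D i)"
    unfolding RS_sum_def D_def[symmetric]
    by (simp add: sum_D left_diff_distrib sum_subtractf flip: sum_distrib_left)
  also have "\<bar>\<dots>\<bar> \<le> (\<Sum>i<n. \<delta> * D i)"
    using term_le by (intro order_trans[OF sum_abs] sum_mono) simp
  also have "\<dots> = \<delta>"
    by (simp add: sum_D flip: sum_distrib_left)
  finally show ?thesis .
qed

lemma integrable_bounded_mult:
  fixes W :: "'a \<Rightarrow> complex" and c :: "'a \<Rightarrow> real"
  assumes W: "integrable M W" and [measurable]: "c \<in> borel_measurable M"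
    and bounded: "\<And>k. \<bar>c k\<bar> \<le> B"
  shows "integrable M (\<lambda>k. c k * W k)"
proof (rule Bochner_Integration.integrable_bound)
  show "integrable M (\<lambda>k. B * norm (W k))"
    using W by simp
  have [measurable]: "W \<in> borel_measurable M"
    using W by (rule borel_measurable_integrable)
  show "(\<lambda>k. complex_of_real (c k) * W k) \<in> borel_measurable M"
    by measurable
  have "B \<ge> 0"
    using bounded abs_ge_zero order_trans by blast
  then show "AE k in M. norm (c k * W k) \<le> norm (B * norm (W k))"
    using bounded by (intro AE_I2) (simp add: norm_mult mult_right_mono)
qed

lemma borel_measurable_cnj [measurable]:
  "f \<in> borel_measurable M \<Longrightarrow> (\<lambda>x. cnj (f x)) \<in> borel_measurable M"
  by (rule borel_measurable_continuous_on) (auto intro: continuous_on_cnj continuous_on_id)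

lemma integrable_weighted_mult_cnj:
  fixes u v :: "'a \<Rightarrow> complex" and w :: "'a \<Rightarrow> real"
  assumes w: "\<And>k. w k \<ge> 0"
    and [measurable]: "u \<in> borel_measurable M" "v \<in> borel_measurable M" "w \<in> borel_measurable M"
    and u: "integrable M (\<lambda>k. w k * (cmod (u k))\<^sup>2)" and v: "integrable M (\<lambda>k. w k * (cmod (v k))\<^sup>2)"
  shows "integrable M (\<lambda>k. w k * u k * cnj (v k))"
proof (rule Bochner_Integration.integrable_bound)
  show "integrable M (\<lambda>k. w k * (cmod (u k))\<^sup>2 + w k * (cmod (v k))\<^sup>2)"
    using u v by simp
  show "(\<lambda>k. complex_of_real (w k) * u k * cnj (v k)) \<in> borel_measurable M"
    by measurable
  have "norm (w k * u k * cnj (v k)) \<le> w k * (cmod (u k))\<^sup>2 + w k * (cmod (v k))\<^sup>2" for k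
  proof -
    have "cmod (u k) * cmod (v k) \<le> (cmod (u k))\<^sup>2 + (cmod (v k))\<^sup>2"
      using sum_squares_bound[of "cmod (u k)" "cmod (v k)"]
        mult_nonneg_nonneg[OF norm_ge_zero norm_ge_zero, of "u k" "v k"] by linarith
    then have "w k * (cmod (u k) * cmod (v k)) \<le> w k * ((cmod (u k))\<^sup>2 + (cmod (v k))\<^sup>2)"
      using w[of k] by (rule mult_left_mono)
    then show ?thesis
      using w[of k] by (simp add: norm_mult distrib_left mult.assoc)
  qed
  then show "AE k in M. norm (w k * u k * cnj (v k)) \<le> norm (w k * (cmod (u k))\<^sup>2 + w k * (cmod (v k))\<^sup>2)"
    using w by (intro AE_I2) (simp add: order_trans[OF _ abs_ge_self])
qed

lemma RS_sum_heaviside_integral: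
  fixes W :: "'a \<Rightarrow> complex"
  assumes W: "integrable M W" and [measurable]: "c \<in> borel_measurable M" "Measurable.pred M b"
  shows "integrable M (\<lambda>k. RS_sum (\<lambda>t. t) (heaviside (b k) (c k)) n x \<xi> * W k)"
    and "RS_sum complex_of_real (\<lambda>t. \<integral>k. heaviside (b k) (c k) t * W k \<partial>M) n x \<xi>
           = (\<integral>k. RS_sum (\<lambda>t. t) (heaviside (b k) (c k)) n x \<xi> * W k \<partial>M)"
proof -
  have HW: "integrable M (\<lambda>k. heaviside (b k) (c k) t * W k)" for t
    using W by (rule integrable_bounded_mult) (use abs_heaviside_le_1 in auto)
  have sum_eq: "RS_sum (\<lambda>t. t) (heaviside (b k) (c k)) n x \<xi> * W k
      = (\<Sum>i<n. \<xi> i * (heaviside (b k) (c k) (x (Suc i)) * W k - heaviside (b k) (c k) (x i) * W k))"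
    for k
    unfolding RS_sum_def by (simp add: sum_distrib_right mult.assoc left_diff_distrib)
  show "integrable M (\<lambda>k. RS_sum (\<lambda>t. t) (heaviside (b k) (c k)) n x \<xi> * W k)"
    unfolding sum_eq using HW by simp
  show "RS_sum complex_of_real (\<lambda>t. \<integral>k. heaviside (b k) (c k) t * W k \<partial>M) n x \<xi>
      = (\<integral>k. RS_sum (\<lambda>t. t) (heaviside (b k) (c k)) n x \<xi> * W k \<partial>M)"
    unfolding sum_eq unfolding RS_sum_def using HW by simp
qed

lemma RS_sum_heaviside_integral_approx:
  fixes W :: "'a \<Rightarrow> complex"
  assumes W: "integrable M W" and [measurable]: "c \<in> borel_measurable M" "Measurable.pred M b"
    and lo: "\<And>k. heaviside (b k) (c k) lo = 0" and hi: "\<And>k. heaviside (b k) (c k) hi = 1"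
    and P: "fine_partition lo hi \<delta> n x \<xi>"
  shows "cmod (RS_sum complex_of_real (\<lambda>t. \<integral>k. heaviside (b k) (c k) t * W k \<partial>M) n x \<xi>
                - (\<integral>k. c k * W k \<partial>M)) \<le> \<delta> * (\<integral>k. norm (W k) \<partial>M)"
proof -
  have c_bounded: "\<bar>c k\<bar> \<le> \<bar>lo\<bar> + \<bar>hi\<bar>" for k
    using heaviside_eq_0_imp_le[OF lo[of k]] heaviside_eq_1_imp_ge[OF hi[of k]] by linarith
  have cW: "integrable M (\<lambda>k. c k * W k)"
    using W by (rule integrable_bounded_mult) (use c_bounded in simp_all)
  define D where "D k = RS_sum (\<lambda>t. t) (heaviside (b k) (c k)) n x \<xi>" for k
  note DW = RS_sum_heaviside_integral[OF W, of c b n x \<xi>, folded D_def]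
  have "RS_sum complex_of_real (\<lambda>t. \<integral>k. heaviside (b k) (c k) t * W k \<partial>M) n x \<xi>
            - (\<integral>k. c k * W k \<partial>M) = (\<integral>k. (D k - c k) * W k \<partial>M)"
    using DW cW by (simp add: left_diff_distrib)
  also have "cmod \<dots> \<le> (\<integral>k. norm ((D k - c k) * W k) \<partial>M)"
    by (rule integral_norm_bound)
  also have "\<dots> \<le> (\<integral>k. \<delta> * norm (W k) \<partial>M)"
  proof (rule integral_mono)
    show "integrable M (\<lambda>k. norm ((D k - c k) * W k))"
      using DW cW by (simp add: left_diff_distrib)
    show "integrable M (\<lambda>k. \<delta> * norm (W k))"
      using W by simp
    show "norm ((D k - c k) * W k) \<le> \<delta> * norm (W k)" for k
      using RS_sum_heaviside[OF P lo hi, of k] unfolding D_def[symmetric]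
      by (simp add: norm_mult mult_right_mono del: of_real_diff)
  qed
  also have "\<dots> = \<delta> * (\<integral>k. norm (W k) \<partial>M)"
    by simp
  finally show ?thesis .
qed

lemma RS_has_integral_heaviside_integral:
  fixes W :: "'a \<Rightarrow> complex"
  assumes W: "integrable M W" and [measurable]: "c \<in> borel_measurable M" "Measurable.pred M b"
    and lo: "\<And>k. heaviside (b k) (c k) lo = 0" and hi: "\<And>k. heaviside (b k) (c k) hi = 1"
  shows "RS_has_integral complex_of_real (\<lambda>t. \<integral>k. heaviside (b k) (c k) t * W k \<partial>M) lo hi
           (\<integral>k. c k * W k \<partial>M)"
  unfolding RS_has_integral_iff
proof (intro allI impI)
  fix \<epsilon> :: real assume "\<epsilon> > 0"
  define C where "C = (\<integral>k. norm (W k) \<partial>M)"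
  have "C \<ge> 0"
    unfolding C_def by simp
  define \<delta> where "\<delta> = \<epsilon> / (C + 1)"
  have "\<delta> > 0" and "\<delta> * C < \<epsilon>"
    unfolding \<delta>_def using \<open>\<epsilon> > 0\<close> \<open>C \<ge> 0\<close> by (simp_all add: field_simps)
  moreover have "cmod (RS_sum complex_of_real (\<lambda>t. \<integral>k. heaviside (b k) (c k) t * W k \<partial>M) n x \<xi>
      - (\<integral>k. c k * W k \<partial>M)) < \<epsilon>" if "fine_partition lo hi \<delta> n x \<xi>" for n x \<xi>
    using RS_sum_heaviside_integral_approx[OF W assms(2,3) lo hi that] \<open>\<delta> * C < \<epsilon>\<close>
    unfolding C_def by simp
  ultimately show "\<exists>\<delta>>0. \<forall>n x \<xi>. fine_partition lo hi \<delta> n x \<xi> \<longrightarrow>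
      cmod (RS_sum complex_of_real (\<lambda>t. \<integral>k. heaviside (b k) (c k) t * W k \<partial>M) n x \<xi>
              - (\<integral>k. c k * W k \<partial>M)) < \<epsilon>"
    by blast
qed

lemma eventually_heaviside_at_right:
  assumes "c \<noteq> t"
  shows "eventually (\<lambda>s. heaviside b c s = heaviside b c t) (at_right t)"
proof (cases "c < t")
  case True
  have "eventually (\<lambda>s. s \<in> {t<..<t + 1}) (at_right t)"
    by (rule eventually_at_right_real) simp
  then show ?thesis
    by eventually_elim (use True in \<open>auto simp: heaviside_def\<close>)
next
  case False
  with assms have "t < c" by simp
  then have "eventually (\<lambda>s. s \<in> {t<..<c}) (at_right t)"
    by (rule eventually_at_right_real)
  then show ?thesis
    by eventually_elim (use \<open>t < c\<close> in \<open>auto simp: heaviside_def\<close>)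
qed

lemma tendsto_heaviside_integral_at_right:
  fixes W :: "'a \<Rightarrow> complex"
  assumes W: "integrable M W" and [measurable]: "c \<in> borel_measurable M" "Measurable.pred M b"
    and no_jump: "\<And>k. c k \<noteq> t"
  shows "((\<lambda>s. \<integral>k. heaviside (b k) (c k) s * W k \<partial>M)
           \<longlongrightarrow> (\<integral>k. heaviside (b k) (c k) t * W k \<partial>M)) (at_right t)"
proof (rule tendsto_at_right_sequentially[of t "t + 1"])
  have [measurable]: "W \<in> borel_measurable M"
    using W by (rule borel_measurable_integrable)
  fix S :: "nat \<Rightarrow> real"
  assume "\<And>n. t < S n" and "S \<longlonglongrightarrow> t"
  then have S: "filterlim S (at_right t) sequentially"
    by (intro tendsto_imp_filterlim_at_right) auto
  show "(\<lambda>n. \<integral>k. heaviside (b k) (c k) (S n) * W k \<partial>M)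
          \<longlonglongrightarrow> (\<integral>k. heaviside (b k) (c k) t * W k \<partial>M)"
  proof (rule integral_dominated_convergence[where w = "\<lambda>k. norm (W k)"])
    show "AE k in M. (\<lambda>n. heaviside (b k) (c k) (S n) * W k) \<longlonglongrightarrow> heaviside (b k) (c k) t * W k"
    proof (intro AE_I2 tendsto_eventually)
      fix k
      show "\<forall>\<^sub>F n in sequentially. heaviside (b k) (c k) (S n) * W k = heaviside (b k) (c k) t * W k"
        using filterlim_iff[THEN iffD1, OF S, rule_format, OF eventually_heaviside_at_right[OF no_jump[of k], of "b k"]]
        by eventually_elim simp
    qed
    show "AE k in M. norm (heaviside (b k) (c k) (S n) * W k) \<le> norm (W k)" for n
      using abs_heaviside_le_1 by (intro AE_I2) (simp add: norm_mult mult_left_le_one_le)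
  qed (use W in simp_all)
qed simp

section \<open>The spectral resolution for touching disks\<close>

\<comment> \<open>The diagonal of the matrix K(k) is (np_symbol R r k, - np_symbol R r k).\<close>
definition np_symbol :: "real \<Rightarrow> real \<Rightarrow> real \<Rightarrow> real" where
  "np_symbol R r k = exp (- \<bar>k\<bar> * q1 R r) / 2"

lemma q1_pos: "R > 0 \<Longrightarrow> r > 0 \<Longrightarrow> q1 R r > 0"
  unfolding q1_def by (intro add_pos_pos) simp_all

lemma np_symbol_pos: "np_symbol R r k > 0"
  unfolding np_symbol_def by simp

lemma np_symbol_le_half: "R > 0 \<Longrightarrow> r > 0 \<Longrightarrow> np_symbol R r k \<le> 1 / 2"
  using q1_pos[of R r] unfolding np_symbol_def by simp

lemma np_symbol_eq_half_iff: "R > 0 \<Longrightarrow> r > 0 \<Longrightarrow> np_symbol R r k = 1 / 2 \<longleftrightarrow> k = 0"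
  using q1_pos[of R r] unfolding np_symbol_def by auto

lemma np_symbol_measurable [measurable]: "np_symbol R r \<in> borel_measurable borel"
  unfolding np_symbol_def by measurable

lemma heaviside_np_symbol_endpoints:
  assumes "R > 0" "r > 0"
  shows "heaviside (k \<le> 0) (np_symbol R r k) (- 1 / 2) = 0"
    and "heaviside (k \<le> 0) (np_symbol R r k) (1 / 2) = 1"
    and "heaviside (0 < k) (- np_symbol R r k) (- 1 / 2) = 0"
    and "heaviside (0 < k) (- np_symbol R r k) (1 / 2) = 1"
  using np_symbol_pos[of R r k] np_symbol_le_half[OF assms, of k] np_symbol_eq_half_iff[OF assms, of k]
  unfolding heaviside_def by auto

lemma le_ln_div_iff: "(q::real) > 0 \<Longrightarrow> u > 0 \<Longrightarrow> k \<le> ln u / q \<longleftrightarrow> exp (k * q) \<le> u"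
  using pos_le_divide_eq[of q k "ln u"] ln_ge_iff[of u "k * q"] by simp

lemma le_minus_ln_div_iff: "(q::real) > 0 \<Longrightarrow> u > 0 \<Longrightarrow> k \<le> - ln u / q \<longleftrightarrow> u \<le> exp (- k * q)"
  using pos_le_divide_eq[of q k "- ln u"] ln_le_cancel_iff[of u "exp (- k * q)"] by auto

lemma chi_window_eq_heaviside:
  assumes "R > 0" "r > 0" "- 1 / 2 \<le> t" "t < 0"
  shows "chi (- ln (- 2 * t) / q1 R r) k - chi (ln (- 2 * t) / q1 R r) k
           = heaviside (0 < k) (- np_symbol R r k) t"
proof -
  define q where "q = q1 R r"
  define u where "u = - 2 * t"
  have "q > 0" "u > 0" "u \<le> 1"
    using q1_pos[OF assms(1,2)] assms(3,4) unfolding q_def u_def by auto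
  have heaviside_eq: "heaviside (0 < k) (- np_symbol R r k) t
      = (if u < exp (- \<bar>k\<bar> * q) \<or> (0 < k \<and> u = exp (- \<bar>k\<bar> * q)) then 1 else 0)"
    unfolding heaviside_def np_symbol_def q_def u_def by auto
  show ?thesis
  proof (cases "k > 0")
    case True
    then have "1 < exp (k * q)"
      using \<open>q > 0\<close> by simp
    then have "\<not> exp (k * q) \<le> u"
      using \<open>u \<le> 1\<close> by linarith
    then show ?thesis
      unfolding heaviside_eq chi_def q_def[symmetric] u_def[symmetric]
        le_ln_div_iff[OF \<open>q > 0\<close> \<open>u > 0\<close>] le_minus_ln_div_iff[OF \<open>q > 0\<close> \<open>u > 0\<close>]
      using True by (auto simp: abs_of_pos)
  next
    case False
    then have "1 \<le> exp (- k * q)"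
      using \<open>q > 0\<close> by (simp add: mult_nonpos_nonneg)
    then have "u \<le> exp (- k * q)"
      using \<open>u \<le> 1\<close> by linarith
    then show ?thesis
      unfolding heaviside_eq chi_def q_def[symmetric] u_def[symmetric]
        le_ln_div_iff[OF \<open>q > 0\<close> \<open>u > 0\<close>] le_minus_ln_div_iff[OF \<open>q > 0\<close> \<open>u > 0\<close>]
      using False by (auto simp: abs_of_nonpos)
  qed
qed

lemma Eop_eq_heaviside:
  fixes g :: "real \<Rightarrow> complex \<times> complex"
  assumes R: "R > 0" and r: "r > 0" and t: "t \<in> {- 1 / 2..1 / 2}" "t \<noteq> 0"
  shows "Eop R r t g k = (heaviside (k \<le> 0) (np_symbol R r k) t * fst (g k),
                          heaviside (0 < k) (- np_symbol R r k) t * snd (g k))"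
proof (cases "t < 0")
  case True
  have "heaviside (k \<le> 0) (np_symbol R r k) t = 0"
    using np_symbol_pos[of R r k] True unfolding heaviside_def by auto
  then show ?thesis
    using chi_window_eq_heaviside[OF R r _ True, of k] t True
    unfolding Eop_def P2_def by (simp flip: left_diff_distrib)
next
  case False
  with t have "0 < t" by simp
  have "heaviside (0 < k) (- np_symbol R r k) t = 1"
    using np_symbol_pos[of R r k] \<open>0 < t\<close> unfolding heaviside_def by auto
  moreover have window: "chi (ln (2 * t) / q1 R r) k - chi (- ln (2 * t) / q1 R r) k + 1
      = heaviside (k \<le> 0) (np_symbol R r k) t"
    using chi_window_eq_heaviside[OF R r, of "- t" k] heaviside_reflect[of "k \<le> 0" _ t] t \<open>0 < t\<close>
    by (simp add: not_le) (metis minus_diff_eq)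
  have "chi (ln (2 * t) / q1 R r) k * fst (g k) - chi (- ln (2 * t) / q1 R r) k * fst (g k) + fst (g k)
      = heaviside (k \<le> 0) (np_symbol R r k) t * fst (g k)"
    unfolding window[symmetric] by (simp add: algebra_simps)
  ultimately show ?thesis
    using False unfolding Eop_def P1_def Iop_def by (simp add: prod_eq_iff)
qed

lemma S11_nonneg: "R > 0 \<Longrightarrow> r > 0 \<Longrightarrow> S11 R r k \<ge> 0"
  using q1_pos[of R r] unfolding S11_def by simp

lemma S22_nonneg: "S22 R r k \<ge> 0"
  unfolding S22_def by simp

lemma S11_measurable [measurable]: "S11 R r \<in> borel_measurable borel"
  unfolding S11_def by measurable

lemma S22_measurable [measurable]: "S22 R r \<in> borel_measurable borel"
  unfolding S22_def by measurable

lemma K0_measurable: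
  assumes "f \<in> K0 R r"
  shows "(\<lambda>k. fst (f k)) \<in> borel_measurable borel" "(\<lambda>k. snd (f k)) \<in> borel_measurable borel"
  using assms unfolding K0_def by auto

lemma K0_integrable_energy:
  assumes R: "R > 0" and r: "r > 0" and f: "f \<in> K0 R r"
  shows "integrable lborel (\<lambda>k. S11 R r k * (cmod (fst (f k)))\<^sup>2)"
    and "integrable lborel (\<lambda>k. S22 R r k * (cmod (snd (f k)))\<^sup>2)"
proof -
  have [measurable]: "(\<lambda>k. fst (f k)) \<in> borel_measurable borel" "(\<lambda>k. snd (f k)) \<in> borel_measurable borel"
    using K0_measurable[OF f] by auto
  define E where "E k = S11 R r k * (cmod (fst (f k)))\<^sup>2 + S22 R r k * (cmod (snd (f k)))\<^sup>2" for k
  have "(\<integral>\<^sup>+ k. ennreal (E k) \<partial>lborel) < \<infinity>"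
    using f unfolding K0_def E_def by auto
  moreover have "E k \<ge> 0" for k
    unfolding E_def using S11_nonneg[OF R r, of k] S22_nonneg[of R r k] by simp
  ultimately have E: "integrable lborel E"
    unfolding E_def by (intro integrableI_bounded) auto
  show "integrable lborel (\<lambda>k. S11 R r k * (cmod (fst (f k)))\<^sup>2)"
    by (rule Bochner_Integration.integrable_bound[OF E])
      (use S11_nonneg[OF R r] S22_nonneg in \<open>auto simp: E_def\<close>)
  show "integrable lborel (\<lambda>k. S22 R r k * (cmod (snd (f k)))\<^sup>2)"
    by (rule Bochner_Integration.integrable_bound[OF E])
      (use S11_nonneg[OF R r] S22_nonneg in \<open>auto simp: E_def\<close>)
qed

definition ip_density_fst :: "real \<Rightarrow> real \<Rightarrow> (real \<Rightarrow> complex \<times> complex) \<Rightarrow> (real \<Rightarrow> complex \<times> complex) \<Rightarrow> real \<Rightarrow> complex" where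
  "ip_density_fst R r f g k = complex_of_real (S11 R r k) * fst (f k) * cnj (fst (g k))"

definition ip_density_snd :: "real \<Rightarrow> real \<Rightarrow> (real \<Rightarrow> complex \<times> complex) \<Rightarrow> (real \<Rightarrow> complex \<times> complex) \<Rightarrow> real \<Rightarrow> complex" where
  "ip_density_snd R r f g k = complex_of_real (S22 R r k) * snd (f k) * cnj (snd (g k))"

lemma integrable_ip_density:
  assumes "R > 0" "r > 0" "f \<in> K0 R r" "g \<in> K0 R r"
  shows "integrable lborel (ip_density_fst R r f g)" "integrable lborel (ip_density_snd R r f g)"
  unfolding ip_density_fst_def ip_density_snd_def
  using assms K0_measurable[OF assms(3)] K0_measurable[OF assms(4)]
  by (auto intro!: integrable_weighted_mult_cnj K0_integrable_energy S11_nonneg S22_nonneg)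

lemma ip_Eop:
  assumes R: "R > 0" and r: "r > 0" and f: "f \<in> K0 R r" and g: "g \<in> K0 R r"
    and t: "t \<in> {- 1 / 2..1 / 2}" "t \<noteq> 0"
  shows "ip R r f (Eop R r t g) =
           (\<integral>k. heaviside (k \<le> 0) (np_symbol R r k) t * ip_density_fst R r f g k \<partial>lborel) +
           (\<integral>k. heaviside (0 < k) (- np_symbol R r k) t * ip_density_snd R r f g k \<partial>lborel)"
proof -
  have "ip R r f (Eop R r t g) =
      (\<integral>k. heaviside (k \<le> 0) (np_symbol R r k) t * ip_density_fst R r f g k +
           heaviside (0 < k) (- np_symbol R r k) t * ip_density_snd R r f g k \<partial>lborel)"
    unfolding ip_def Eop_eq_heaviside[OF R r t] ip_density_fst_def ip_density_snd_def
    by (intro Bochner_Integration.integral_cong) (simp_all add: ac_simps)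
  also have "\<dots> = (\<integral>k. heaviside (k \<le> 0) (np_symbol R r k) t * ip_density_fst R r f g k \<partial>lborel) +
      (\<integral>k. heaviside (0 < k) (- np_symbol R r k) t * ip_density_snd R r f g k \<partial>lborel)"
    using integrable_ip_density[OF R r f g]
    by (intro Bochner_Integration.integral_add integrable_bounded_mult[where B = 1] abs_heaviside_le_1)
      measurable
  finally show ?thesis .
qed

lemma ip_NP:
  assumes R: "R > 0" and r: "r > 0" and f: "f \<in> K0 R r" and g: "g \<in> K0 R r"
  shows "ip R r f (NP R r g) =
           (\<integral>k. np_symbol R r k * ip_density_fst R r f g k \<partial>lborel) +
           (\<integral>k. (- np_symbol R r k) * ip_density_snd R r f g k \<partial>lborel)"
proof -
  have bounded: "\<bar>np_symbol R r k\<bar> \<le> 1 / 2" "\<bar>- np_symbol R r k\<bar> \<le> 1 / 2" for k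
    using np_symbol_pos[of R r k] np_symbol_le_half[OF R r, of k] by auto
  have "ip R r f (NP R r g) =
      (\<integral>k. np_symbol R r k * ip_density_fst R r f g k +
           (- np_symbol R r k) * ip_density_snd R r f g k \<partial>lborel)"
    unfolding ip_def NP_def ip_density_fst_def ip_density_snd_def np_symbol_def
    by (intro Bochner_Integration.integral_cong) (simp_all add: ac_simps)
  also have "\<dots> = (\<integral>k. np_symbol R r k * ip_density_fst R r f g k \<partial>lborel) +
      (\<integral>k. (- np_symbol R r k) * ip_density_snd R r f g k \<partial>lborel)"
    using integrable_ip_density[OF R r f g]
    by (intro Bochner_Integration.integral_add integrable_bounded_mult[where B = "1 / 2"] bounded)
      measurable
  finally show ?thesis .
qed

lemma Eform_eq:
  assumes R: "R > 0" and r: "r > 0" and f: "f \<in> K0 R r" and g: "g \<in> K0 R r"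
    and t: "t \<in> {- 1 / 2..1 / 2}"
  shows "Eform R r f g t =
           (\<integral>k. heaviside (k \<le> 0) (np_symbol R r k) t * ip_density_fst R r f g k \<partial>lborel) +
           (\<integral>k. heaviside (0 < k) (- np_symbol R r k) t * ip_density_snd R r f g k \<partial>lborel)"
    (is "_ = ?\<Phi> t")
proof (cases "t = 0")
  case True
  \<comment> \<open>E(0) is a right limit; the steps do not jump at 0 because np_symbol is positive.\<close>
  have "(?\<Phi> \<longlongrightarrow> ?\<Phi> 0) (at_right 0)"
    using integrable_ip_density[OF R r f g]
    by (intro tendsto_add tendsto_heaviside_integral_at_right) (auto simp: np_symbol_def)
  moreover have "eventually (\<lambda>s. ?\<Phi> s = ip R r f (Eop R r s g)) (at_right 0)"
  proof -
    have "eventually (\<lambda>s. s \<in> {0<..<1 / 2}) (at_right (0::real))"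
      by (rule eventually_at_right_real) simp
    then show ?thesis
      by eventually_elim (simp add: ip_Eop[OF R r f g])
  qed
  ultimately have "((\<lambda>s. ip R r f (Eop R r s g)) \<longlongrightarrow> ?\<Phi> 0) (at_right 0)"
    by (rule Lim_transform_eventually)
  then show ?thesis
    unfolding Eform_def True by (simp add: tendsto_Lim trivial_limit_at_right_real)
next
  case False
  then show ?thesis
    unfolding Eform_def using ip_Eop[OF R r f g t False] by simp
qed

theorem theorem4p4:
  fixes R r :: real
  assumes "R > 0" and "r > 0"
  shows "\<forall>f \<in> K0 R r. \<forall>g \<in> K0 R r.
           RS_has_integral (\<lambda>t. complex_of_real t) (Eform R r f g) (-1/2) (1/2)
             (ip R r f (NP R r g))"
proof (intro ballI)
  fix f g assume f: "f \<in> K0 R r" and g: "g \<in> K0 R r"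
  have "RS_has_integral complex_of_real
      (\<lambda>t. (\<integral>k. heaviside (k \<le> 0) (np_symbol R r k) t * ip_density_fst R r f g k \<partial>lborel) +
           (\<integral>k. heaviside (0 < k) (- np_symbol R r k) t * ip_density_snd R r f g k \<partial>lborel))
      (- 1 / 2) (1 / 2) (ip R r f (NP R r g))"
    unfolding ip_NP[OF assms f g]
    using integrable_ip_density[OF assms f g] heaviside_np_symbol_endpoints[OF assms]
    by (intro RS_has_integral_add RS_has_integral_heaviside_integral) auto
  then show "RS_has_integral (\<lambda>t. complex_of_real t) (Eform R r f g) (- 1 / 2) (1 / 2)
      (ip R r f (NP R r g))"
    by (rule RS_has_integral_cong) (simp add: Eform_eq[OF assms f g])
qed

end
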